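(* Let $X,Y:[0,T]\to\mathbb R^2$ be $C^1$ and $\Psi:\mathbb R^2\to\mathbb R^2$ be $C^1$ with $\dot Y=\Psi(Y)$. Let $E_+=\{\Psi_1>0\}$, $E_-=\{\Psi_1<0\}$. Suppose that $X(0)=Y(0)\in E_+\cup E_-$; that for $t\in(0,T]$, $\Psi_1(X(t)),\Psi_1(Y(t))>0$ if $X(0)\in E_+$ and $\Psi_1(X(t)),\Psi_1(Y(t))<0$ if $X(0)\in E_-$; and that $\dot X\le_2\Psi(X)$ (resp. $\dot X\ge_2\Psi(X)$) on $[0,T]$. Then $f_X=X_2\circ X_1^{-1}$ and $f_Y=Y_2\circ Y_1^{-1}$ are well defined, differentiable for $u\ne X_1(0)$, and $f_X(u)\le f_Y(u)$ (resp. $f_X(u)\ge f_Y(u)$) on the intersection of their domains.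
   Context: For $v,w\in\mathbb R^2$, $v\le_2w$ means $v_1=w_1$ and $v_2\le w_2$; $v\ge_2 w$ is defined analogously. *)

theory Defs
  imports "HOL-Analysis.Analysis"
begin

definition le2 :: "real \<times> real \<Rightarrow> real \<times> real \<Rightarrow> bool" where
  "le2 v w \<longleftrightarrow> fst v = fst w \<and> snd v \<le> snd w"

definition ge2 :: "real \<times> real \<Rightarrow> real \<times> real \<Rightarrow> bool" where
  "ge2 v w \<longleftrightarrow> fst v = fst w \<and> snd v \<ge> snd w"

definition graph_fun :: "real \<Rightarrow> (real \<Rightarrow> real \<times> real) \<Rightarrow> real \<Rightarrow> real" where
  "graph_fun T X = (\<lambda>u. snd (X (the_inv_into {0..T} (\<lambda>t. fst (X t)) u)))"

definition graph_dom :: "real \<Rightarrow> (real \<Rightarrow> real \<times> real) \<Rightarrow> real set" where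
  "graph_dom T X = (\<lambda>t. fst (X t)) ` {0..T}"

end

theory Submission
  imports Defs
begin

text \<open>Where \<open>fst \<Psi> \<noteq> 0\<close>, the orbits of \<open>\<Psi>\<close> are graphs over the first coordinate solving the
  scalar equation \<open>f' = G u f\<close> with slope field \<open>G u y = snd (\<Psi> (u, y)) / fst (\<Psi> (u, y))\<close>.
  Since \<open>X\<^sub>1' = \<Psi>\<^sub>1(X)\<close> has constant sign, \<open>X\<^sub>1\<close> is strictly monotone and
  \<open>f\<^sub>X' = G u f\<^sub>X + (X\<^sub>2' - \<Psi>\<^sub>2(X)) / \<Psi>\<^sub>1(X)\<close>, so on the side of \<open>X\<^sub>1(0)\<close> into which the curves move
  \<open>f\<^sub>X\<close> is a sub- or supersolution, while \<open>f\<^sub>Y\<close> is a solution through the same initial point.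
  As \<open>\<Psi>\<close> is \<open>C\<^sup>1\<close>, \<open>G\<close> is locally Lipschitz in \<open>y\<close>, and the classical comparison principle
  (a Gronwall estimate at the last contact point) orders the two graphs.\<close>

section \<open>Comparison principle for scalar ODEs\<close>

definition local_lipschitz_at :: "(real \<Rightarrow> real \<Rightarrow> real) \<Rightarrow> real \<Rightarrow> real \<Rightarrow> bool" where
  "local_lipschitz_at G x y \<longleftrightarrow> (\<exists>\<delta>>0. \<exists>L. \<forall>v\<in>ball x \<delta>. L-lipschitz_on (ball y \<delta>) (G v))"

lemma ode_comparison_right_local:
  fixes p q p' q' :: "real \<Rightarrow> real" and G :: "real \<Rightarrow> real \<Rightarrow> real"
  assumes "a < d"
    and p_cont: "continuous_on {a..d} p" and q_cont: "continuous_on {a..d} q"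
    and p_deriv: "\<And>x. x \<in> {a<..<d} \<Longrightarrow> (p has_real_derivative p' x) (at x)"
    and q_deriv: "\<And>x. x \<in> {a<..<d} \<Longrightarrow> (q has_real_derivative q' x) (at x)"
    and sub: "\<And>x. x \<in> {a<..<d} \<Longrightarrow> p' x \<le> G x (p x)"
    and super: "\<And>x. x \<in> {a<..<d} \<Longrightarrow> G x (q x) \<le> q' x"
    and "p a \<le> q a" and "local_lipschitz_at G a (q a)"
  shows "\<exists>x\<in>{a<..d}. p x \<le> q x"
proof (rule ccontr)
  assume "\<not> ?thesis"
  hence above: "\<And>x. x \<in> {a<..d} \<Longrightarrow> q x < p x" by force
  from \<open>local_lipschitz_at G a (q a)\<close> obtain \<delta> L where "\<delta> > 0"
    and L: "\<And>v. v \<in> ball a \<delta> \<Longrightarrow> L-lipschitz_on (ball (q a) \<delta>) (G v)"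
    unfolding local_lipschitz_at_def by blast
  have p_lim: "(p \<longlongrightarrow> p a) (at_right a)" and q_lim: "(q \<longlongrightarrow> q a) (at_right a)"
    using continuous_on_Icc_at_rightD[OF _ \<open>a < d\<close>] p_cont q_cont by auto
  have "\<forall>\<^sub>F x in at_right a. x < d \<and> x \<in> ball a \<delta> \<and> p x \<in> ball (p a) \<delta> \<and> q x \<in> ball (q a) \<delta>
      \<and> (p a < q a \<longrightarrow> p x < q x)"
  proof -
    have "((\<lambda>x. x) \<longlongrightarrow> a) (at_right a)" by (rule tendsto_ident_at)
    hence "\<forall>\<^sub>F x in at_right a. x < d" "\<forall>\<^sub>F x in at_right a. x \<in> ball a \<delta>"
      using order_tendstoD(2)[OF _ \<open>a < d\<close>] tendstoD[OF _ \<open>\<delta> > 0\<close>] by (fastforce simp: dist_commute)+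
    moreover have "\<forall>\<^sub>F x in at_right a. p x \<in> ball (p a) \<delta>" "\<forall>\<^sub>F x in at_right a. q x \<in> ball (q a) \<delta>"
      using tendstoD[OF p_lim \<open>\<delta> > 0\<close>] tendstoD[OF q_lim \<open>\<delta> > 0\<close>] by (simp_all add: dist_commute)
    moreover have "\<forall>\<^sub>F x in at_right a. p a < q a \<longrightarrow> p x < q x"
    proof (cases "p a < q a")
      case True
      then show ?thesis
        using order_tendstoD(1)[OF tendsto_diff[OF q_lim p_lim], of 0] by (simp add: eventually_mono)
    qed simp
    ultimately show ?thesis by eventually_elim blast
  qed
  then obtain b where "a < b" and near: "\<And>x. a < x \<Longrightarrow> x < b \<Longrightarrow> x < d \<and> x \<in> ball a \<delta>
      \<and> p x \<in> ball (p a) \<delta> \<and> q x \<in> ball (q a) \<delta> \<and> (p a < q a \<longrightarrow> p x < q x)"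
    unfolding eventually_at_right_field by blast
  define e where "e = (a + b) / 2"
  have e: "a < e" "e < b" "e < d" using \<open>a < b\<close> near[of e] by (auto simp: e_def)
  have "p a = q a" using \<open>p a \<le> q a\<close> near[OF e(1,2)] above[of e] e by force
  \<comment> \<open>Gronwall: near the contact point the weighted gap is nonincreasing, yet it starts at 0.\<close>
  define h where "h x = exp (- L * x) * (p x - q x)" for x
  have "h e \<le> h a"
  proof (rule DERIV_nonpos_imp_decreasing_open[of a e h])
    fix x assume x: "a < x" "x < e"
    with e near[of x] have x_in: "x \<in> {a<..<d}" and ball: "x \<in> ball a \<delta>"
      "p x \<in> ball (q a) \<delta>" "q x \<in> ball (q a) \<delta>" using \<open>p a = q a\<close> by auto
    have "p' x - q' x \<le> G x (p x) - G x (q x)" using sub[OF x_in] super[OF x_in] by simp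
    also have "\<dots> \<le> L * (p x - q x)"
      using lipschitz_onD[OF L[OF ball(1)] ball(2,3)] above[of x] x_in
      by (simp add: dist_real_def)
    finally have "exp (- L * x) * ((p' x - q' x) - L * (p x - q x)) \<le> 0"
      by (simp add: mult_nonneg_nonpos)
    moreover have "(h has_real_derivative exp (- L * x) * ((p' x - q' x) - L * (p x - q x))) (at x)"
      unfolding h_def using p_deriv[OF x_in] q_deriv[OF x_in]
      by (auto intro!: derivative_eq_intros simp: algebra_simps)
    ultimately show "\<exists>y. (h has_real_derivative y) (at x) \<and> y \<le> 0" by blast
  next
    show "continuous_on {a..e} h" unfolding h_def using e
      by (intro continuous_intros continuous_on_subset[OF p_cont] continuous_on_subset[OF q_cont]) auto
  qed (use e in simp)
  moreover have "h a = 0" by (simp add: h_def \<open>p a = q a\<close>)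
  moreover have "0 < h e" using above[of e] e by (simp add: h_def)
  ultimately show False by simp
qed

lemma ode_comparison_right:
  fixes p q p' q' :: "real \<Rightarrow> real" and G :: "real \<Rightarrow> real \<Rightarrow> real"
  assumes "c \<le> d"
    and p_cont: "continuous_on {c..d} p" and q_cont: "continuous_on {c..d} q"
    and p_deriv: "\<And>x. x \<in> {c<..<d} \<Longrightarrow> (p has_real_derivative p' x) (at x)"
    and q_deriv: "\<And>x. x \<in> {c<..<d} \<Longrightarrow> (q has_real_derivative q' x) (at x)"
    and sub: "\<And>x. x \<in> {c<..<d} \<Longrightarrow> p' x \<le> G x (p x)"
    and super: "\<And>x. x \<in> {c<..<d} \<Longrightarrow> G x (q x) \<le> q' x"
    and "p c \<le> q c" and lip: "\<And>x. x \<in> {c..d} \<Longrightarrow> local_lipschitz_at G x (q x)"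
  shows "p d \<le> q d"
proof (rule ccontr)
  assume "\<not> p d \<le> q d"
  define S where "S = {x \<in> {c..d}. p x \<le> q x}"
  have "closed S"
    unfolding S_def by (rule continuous_on_closed_Collect_le[OF p_cont q_cont closed_atLeastAtMost])
  moreover have "c \<in> S" "bdd_above S"
    using \<open>c \<le> d\<close> \<open>p c \<le> q c\<close> by (auto simp: S_def intro: bdd_aboveI[of _ d])
  ultimately have "Sup S \<in> S" by (metis closed_contains_Sup empty_iff)
  with \<open>\<not> p d \<le> q d\<close> have a: "c \<le> Sup S" "Sup S < d" "p (Sup S) \<le> q (Sup S)"
    by (auto simp: S_def order.order_iff_strict)
  have "\<exists>x\<in>{Sup S<..d}. p x \<le> q x"
  proof (rule ode_comparison_right_local[of "Sup S" d p q p' q' G])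
    show "continuous_on {Sup S..d} p" "continuous_on {Sup S..d} q"
      using a by (auto intro: continuous_on_subset[OF p_cont] continuous_on_subset[OF q_cont])
  qed (use a p_deriv q_deriv sub super lip in auto)
  then obtain x where "x \<in> S" "Sup S < x"
    using a by (auto simp: S_def)
  with \<open>bdd_above S\<close> show False by (meson cSup_upper leD)
qed

lemma local_lipschitz_at_mirror:
  assumes "local_lipschitz_at G (- x) y"
  shows "local_lipschitz_at (\<lambda>v w. - G (- v) w) x y"
proof -
  from assms obtain \<delta> L where "\<delta> > 0" and L: "\<And>v. v \<in> ball (- x) \<delta> \<Longrightarrow> L-lipschitz_on (ball y \<delta>) (G v)"
    unfolding local_lipschitz_at_def by blast
  have "L-lipschitz_on (ball y \<delta>) (\<lambda>w. - G (- v) w)" if "v \<in> ball x \<delta>" for v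
    using L[of "- v"] that by (simp add: dist_real_def)
  with \<open>\<delta> > 0\<close> show ?thesis unfolding local_lipschitz_at_def by blast
qed

lemma ode_comparison_left:
  fixes p q p' q' :: "real \<Rightarrow> real" and G :: "real \<Rightarrow> real \<Rightarrow> real"
  assumes "d \<le> c"
    and p_cont: "continuous_on {d..c} p" and q_cont: "continuous_on {d..c} q"
    and p_deriv: "\<And>x. x \<in> {d<..<c} \<Longrightarrow> (p has_real_derivative p' x) (at x)"
    and q_deriv: "\<And>x. x \<in> {d<..<c} \<Longrightarrow> (q has_real_derivative q' x) (at x)"
    and super: "\<And>x. x \<in> {d<..<c} \<Longrightarrow> G x (p x) \<le> p' x"
    and sub: "\<And>x. x \<in> {d<..<c} \<Longrightarrow> q' x \<le> G x (q x)"
    and "p c \<le> q c" and lip: "\<And>x. x \<in> {d..c} \<Longrightarrow> local_lipschitz_at G x (q x)"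
  shows "p d \<le> q d"
proof -
  have mirror_deriv: "((\<lambda>x. f (- x)) has_real_derivative - f' (- x)) (at x)"
    if "x \<in> {- c<..<- d}" "\<And>x. x \<in> {d<..<c} \<Longrightarrow> (f has_real_derivative f' x) (at x)" for f f' x
    using DERIV_mirror[of f "f' (- x)" x] that by simp
  have "p (- (- d)) \<le> q (- (- d))"
  proof (rule ode_comparison_right[of "- c" "- d" "\<lambda>x. p (- x)" "\<lambda>x. q (- x)"
        "\<lambda>x. - p' (- x)" "\<lambda>x. - q' (- x)" "\<lambda>v w. - G (- v) w"])
    show "continuous_on {- c..- d} (\<lambda>x. p (- x))" "continuous_on {- c..- d} (\<lambda>x. q (- x))"
      by (auto intro!: continuous_on_compose2[OF p_cont] continuous_on_compose2[OF q_cont]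
          continuous_on_minus continuous_on_id)
    show "((\<lambda>x. p (- x)) has_real_derivative - p' (- x)) (at x)"
      "((\<lambda>x. q (- x)) has_real_derivative - q' (- x)) (at x)"
      "- p' (- x) \<le> - G (- x) (p (- x))" "- G (- x) (q (- x)) \<le> - q' (- x)"
      if "x \<in> {- c<..<- d}" for x
      using mirror_deriv[OF that p_deriv] mirror_deriv[OF that q_deriv] super[of "- x"] sub[of "- x"] that
      by auto
    show "local_lipschitz_at (\<lambda>v w. - G (- v) w) x (q (- x))" if "x \<in> {- c..- d}" for x
      using local_lipschitz_at_mirror lip[of "- x"] that by simp
  qed (use \<open>d \<le> c\<close> \<open>p c \<le> q c\<close> in auto)
  then show ?thesis by simp
qed

lemma has_real_derivative_at_if_within_Icc:
  assumes "(f has_real_derivative D) (at x within S)" "{a..b} \<subseteq> S" "x \<in> {a<..<b}"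
  shows "(f has_real_derivative D) (at x)"
proof -
  have "{a<..<b} \<subseteq> interior S"
    using interior_mono[OF assms(2)] by simp
  with assms(3) have "at x within S = at x" by (intro at_within_interior) blast
  with assms(1) show ?thesis by simp
qed

text \<open>The weight \<open>x - c\<close> makes \<open>p\<close> a subsolution to the right of the common initial point \<open>c\<close>
  and a supersolution to its left, and vice versa for \<open>q\<close>.\<close>

lemma ode_comparison:
  fixes p q :: "real \<Rightarrow> real" and G :: "real \<Rightarrow> real \<Rightarrow> real"
  assumes P: "is_interval P" and Q: "is_interval Q"
    and "c \<in> P" "c \<in> Q" "u \<in> P" "u \<in> Q" "p c \<le> q c"
    and sub: "\<And>x. x \<in> P \<Longrightarrow> \<exists>D. (p has_real_derivative D) (at x within P) \<and> (x - c) * (D - G x (p x)) \<le> 0"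
    and super: "\<And>x. x \<in> Q \<Longrightarrow> \<exists>D. (q has_real_derivative D) (at x within Q) \<and> 0 \<le> (x - c) * (D - G x (q x))"
    and lip: "\<And>x. x \<in> Q \<Longrightarrow> local_lipschitz_at G x (q x)"
  shows "p u \<le> q u"
proof -
  have "\<forall>x\<in>P. \<exists>D. (p has_real_derivative D) (at x within P) \<and> (x - c) * (D - G x (p x)) \<le> 0"
    using sub by blast
  then obtain p' where "\<forall>x\<in>P. (p has_real_derivative p' x) (at x within P) \<and> (x - c) * (p' x - G x (p x)) \<le> 0"
    by (auto dest!: bchoice)
  then have p': "\<And>x. x \<in> P \<Longrightarrow> (p has_real_derivative p' x) (at x within P)"
    "\<And>x. x \<in> P \<Longrightarrow> (x - c) * (p' x - G x (p x)) \<le> 0" by auto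
  have "\<forall>x\<in>Q. \<exists>D. (q has_real_derivative D) (at x within Q) \<and> 0 \<le> (x - c) * (D - G x (q x))"
    using super by blast
  then obtain q' where "\<forall>x\<in>Q. (q has_real_derivative q' x) (at x within Q) \<and> 0 \<le> (x - c) * (q' x - G x (q x))"
    by (auto dest!: bchoice)
  then have q': "\<And>x. x \<in> Q \<Longrightarrow> (q has_real_derivative q' x) (at x within Q)"
    "\<And>x. x \<in> Q \<Longrightarrow> 0 \<le> (x - c) * (q' x - G x (q x))" by auto
  have "continuous_on P p" "continuous_on Q q"
    using p'(1) q'(1) DERIV_continuous continuous_on_eq_continuous_within by blast+
  then have cont: "continuous_on {a..b} p" "continuous_on {a..b} q" if "{a..b} \<subseteq> P \<inter> Q" for a b
    using that by (auto intro: continuous_on_subset)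
  have deriv: "(p has_real_derivative p' x) (at x)" "(q has_real_derivative q' x) (at x)"
    if "{a..b} \<subseteq> P \<inter> Q" "x \<in> {a<..<b}" for a b x
    using that by (auto intro!: has_real_derivative_at_if_within_Icc[OF p'(1)]
        has_real_derivative_at_if_within_Icc[OF q'(1)])
  have PQ: "{c..u} \<subseteq> P \<inter> Q" "{u..c} \<subseteq> P \<inter> Q"
    using interval_subset_is_interval[OF P] interval_subset_is_interval[OF Q] assms(3-6)
    by (simp_all add: cbox_interval)
  show ?thesis
  proof (cases "c \<le> u")
    case True
    show ?thesis
    proof (rule ode_comparison_right[of c u p q p' q' G])
      show "p' x \<le> G x (p x)" "G x (q x) \<le> q' x" if "x \<in> {c<..<u}" for x
      proof -
        have "x \<in> P" "x \<in> Q" "0 < x - c" using PQ(1) that by auto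
        then show "p' x \<le> G x (p x)" "G x (q x) \<le> q' x"
          using p'(2)[of x] q'(2)[of x] by (simp_all add: mult_le_0_iff zero_le_mult_iff)
      qed
      show "local_lipschitz_at G x (q x)" if "x \<in> {c..u}" for x
        using lip PQ(1) that by blast
    qed (fact True cont[OF PQ(1)] deriv[OF PQ(1)] \<open>p c \<le> q c\<close>)+
  next
    case False
    show ?thesis
    proof (rule ode_comparison_left[of u c p q p' q' G])
      show "G x (p x) \<le> p' x" "q' x \<le> G x (q x)" if "x \<in> {u<..<c}" for x
      proof -
        have "x \<in> P" "x \<in> Q" "x - c < 0" using PQ(2) that by auto
        then show "G x (p x) \<le> p' x" "q' x \<le> G x (q x)"
          using p'(2)[of x] q'(2)[of x] by (simp_all add: mult_le_0_iff zero_le_mult_iff)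
      qed
      show "local_lipschitz_at G x (q x)" if "x \<in> {u..c}" for x
        using lip PQ(2) that by blast
      show "u \<le> c" using False by simp
    qed (fact cont[OF PQ(2)] deriv[OF PQ(2)] \<open>p c \<le> q c\<close>)+
  qed
qed

section \<open>The slope field of a \<open>C\<^sup>1\<close> vector field\<close>

lemma C1_lipschitz_on_ball:
  fixes \<Psi> :: "'a::{banach,heine_borel} \<Rightarrow> 'a"
  assumes "\<exists>D :: 'a \<Rightarrow> ('a \<Rightarrow>\<^sub>L 'a). (\<forall>x. (\<Psi> has_derivative blinfun_apply (D x)) (at x)) \<and> continuous_on UNIV D"
  obtains r K where "0 < r" "K-lipschitz_on (ball z r) \<Psi>"
proof -
  from assms obtain D :: "'a \<Rightarrow> ('a \<Rightarrow>\<^sub>L 'a)"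
    where D: "\<And>x. (\<Psi> has_derivative blinfun_apply (D x)) (at x)" "continuous_on UNIV D"
    by blast
  have ll: "local_lipschitz (UNIV :: real set) UNIV (\<lambda>_. \<Psi>)"
    by (rule c1_implies_local_lipschitz[where f' = "\<lambda>(t, x). D x"])
      (auto simp: split_beta intro: D(1) continuous_on_compose2[OF D(2) continuous_on_snd])
  obtain r K where "0 < r" and K: "\<And>s::real. s \<in> cball 0 r \<inter> UNIV \<Longrightarrow> K-lipschitz_on (cball z r \<inter> UNIV) \<Psi>"
    by (rule local_lipschitzE[OF ll UNIV_I[of 0] UNIV_I[of z]]) blast
  have "K-lipschitz_on (ball z r) \<Psi>"
    using K[of 0] \<open>0 < r\<close> lipschitz_on_subset[OF _ ball_subset_cball] by simp
  with \<open>0 < r\<close> show ?thesis by (rule that)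
qed

lemma lipschitz_on_divide:
  fixes f g :: "'a::metric_space \<Rightarrow> real"
  assumes f: "K-lipschitz_on S f" and g: "K-lipschitz_on S g" and "0 < m" "0 \<le> M"
    and g_lower: "\<And>x. x \<in> S \<Longrightarrow> m \<le> \<bar>g x\<bar>"
    and f_upper: "\<And>x. x \<in> S \<Longrightarrow> \<bar>f x\<bar> \<le> M" and g_upper: "\<And>x. x \<in> S \<Longrightarrow> \<bar>g x\<bar> \<le> M"
  shows "(2 * M * K / m\<^sup>2)-lipschitz_on S (\<lambda>x. f x / g x)"
proof (rule lipschitz_onI)
  have "0 \<le> K" using lipschitz_on_nonneg[OF f] .
  then show "0 \<le> 2 * M * K / m\<^sup>2" using \<open>0 \<le> M\<close> by simp
  fix x y assume xy: "x \<in> S" "y \<in> S"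
  have "g x \<noteq> 0" "g y \<noteq> 0" using g_lower[OF xy(1)] g_lower[OF xy(2)] \<open>0 < m\<close> by auto
  then have "f x / g x - f y / g y = (f x * (g y - g x) + g x * (f x - f y)) / (g x * g y)"
    by (simp add: field_simps)
  also have "\<bar>\<dots>\<bar> \<le> (M * (K * dist x y) + M * (K * dist x y)) / (m * m)"
    unfolding abs_divide abs_mult
  proof (rule frac_le)
    show "\<bar>f x * (g y - g x) + g x * (f x - f y)\<bar> \<le> M * (K * dist x y) + M * (K * dist x y)"
      using lipschitz_onD[OF f xy] lipschitz_onD[OF g xy(2,1)] f_upper[OF xy(1)] g_upper[OF xy(1)]
      by (intro order.trans[OF abs_triangle_ineq] add_mono)
        (auto simp: abs_mult dist_real_def dist_commute intro!: mult_mono)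
    show "m * m \<le> \<bar>g x\<bar> * \<bar>g y\<bar>"
      using g_lower[OF xy(1)] g_lower[OF xy(2)] \<open>0 < m\<close> by (intro mult_mono) auto
  qed (use \<open>0 < m\<close> \<open>0 \<le> K\<close> \<open>0 \<le> M\<close> in auto)
  finally show "dist (f x / g x) (f y / g y) \<le> 2 * M * K / m\<^sup>2 * dist x y"
    by (simp add: dist_real_def power2_eq_square mult_ac)
qed

lemma snd_div_fst_lipschitz_on_ball:
  fixes \<Psi> :: "'a::metric_space \<Rightarrow> real \<times> real"
  assumes \<Psi>: "K-lipschitz_on (ball z r) \<Psi>" and "0 < r" and "fst (\<Psi> z) \<noteq> 0"
  obtains \<rho> L where "0 < \<rho>" "L-lipschitz_on (ball z \<rho>) (\<lambda>w. snd (\<Psi> w) / fst (\<Psi> w))"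
proof -
  define m where "m = \<bar>fst (\<Psi> z)\<bar> / 2"
  define \<rho> where "\<rho> = min r (m / (K + 1))"
  have "0 \<le> K" using lipschitz_on_nonneg[OF \<Psi>] .
  have "0 < m" using \<open>fst (\<Psi> z) \<noteq> 0\<close> by (simp add: m_def)
  then have "0 < \<rho>" using \<open>0 < r\<close> \<open>0 \<le> K\<close> by (simp add: \<rho>_def)
  have sub: "ball z \<rho> \<subseteq> ball z r" by (rule subset_ball) (simp add: \<rho>_def)
  have close: "dist (\<Psi> w) (\<Psi> z) < m" if "w \<in> ball z \<rho>" for w
  proof -
    have "dist (\<Psi> w) (\<Psi> z) \<le> K * dist w z"
      using lipschitz_onD[OF \<Psi>] that sub \<open>0 < r\<close> by auto
    also have "\<dots> \<le> K * (m / (K + 1))"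
      using that \<open>0 \<le> K\<close> by (intro mult_left_mono) (auto simp: \<rho>_def dist_commute)
    also have "\<dots> < m" using \<open>0 < m\<close> \<open>0 \<le> K\<close> by (simp add: field_simps)
    finally show ?thesis .
  qed
  let ?M = "norm (\<Psi> z) + m"
  have bounds: "m \<le> \<bar>fst (\<Psi> w)\<bar>" "\<bar>fst (\<Psi> w)\<bar> \<le> ?M" "\<bar>snd (\<Psi> w)\<bar> \<le> ?M" if "w \<in> ball z \<rho>" for w
  proof -
    have "\<bar>fst (\<Psi> w) - fst (\<Psi> z)\<bar> < m"
      using dist_fst_le[of "\<Psi> w" "\<Psi> z"] close[OF that] by (simp add: dist_real_def)
    then show "m \<le> \<bar>fst (\<Psi> w)\<bar>" unfolding m_def by linarith
    have "norm (\<Psi> w) \<le> ?M"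
      using norm_triangle_sub[of "\<Psi> w" "\<Psi> z"] close[OF that] by (simp add: dist_norm)
    then show "\<bar>fst (\<Psi> w)\<bar> \<le> ?M" "\<bar>snd (\<Psi> w)\<bar> \<le> ?M"
      using dist_fst_le[of "\<Psi> w" 0] dist_snd_le[of "\<Psi> w" 0] by simp_all
  qed
  have "K-lipschitz_on (ball z \<rho>) (\<lambda>w. fst (\<Psi> w))" "K-lipschitz_on (ball z \<rho>) (\<lambda>w. snd (\<Psi> w))"
    using lipschitz_on_subset[OF \<Psi> sub] \<open>0 \<le> K\<close>
    by (auto intro!: lipschitz_onI intro: order.trans[OF dist_fst_le] order.trans[OF dist_snd_le]
        dest: lipschitz_onD)
  from lipschitz_on_divide[OF this(2,1) \<open>0 < m\<close> _ bounds(1) bounds(3,2)]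
  show ?thesis using that \<open>0 < \<rho>\<close> by (meson add_nonneg_nonneg norm_ge_zero \<open>0 < m\<close> less_imp_le)
qed

definition slope_field :: "(real \<times> real \<Rightarrow> real \<times> real) \<Rightarrow> real \<Rightarrow> real \<Rightarrow> real" where
  "slope_field \<Psi> v y = snd (\<Psi> (v, y)) / fst (\<Psi> (v, y))"

lemma slope_field_local_lipschitz:
  fixes \<Psi> :: "real \<times> real \<Rightarrow> real \<times> real"
  assumes C1: "\<exists>D :: real \<times> real \<Rightarrow> ((real \<times> real) \<Rightarrow>\<^sub>L (real \<times> real)).
      (\<forall>x. (\<Psi> has_derivative blinfun_apply (D x)) (at x)) \<and> continuous_on UNIV D"
    and "fst (\<Psi> z) \<noteq> 0"
  shows "local_lipschitz_at (slope_field \<Psi>) (fst z) (snd z)"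
proof -
  obtain r K where "0 < r" "K-lipschitz_on (ball z r) \<Psi>"
    using C1_lipschitz_on_ball[OF C1] by blast
  then obtain \<rho> L where "0 < \<rho>" and L: "L-lipschitz_on (ball z \<rho>) (\<lambda>w. snd (\<Psi> w) / fst (\<Psi> w))"
    using snd_div_fst_lipschitz_on_ball \<open>fst (\<Psi> z) \<noteq> 0\<close> by blast
  have "L-lipschitz_on (ball (snd z) (\<rho> / 2)) (slope_field \<Psi> v)" if v: "v \<in> ball (fst z) (\<rho> / 2)" for v
  proof (rule lipschitz_onI)
    have near: "(v, y) \<in> ball z \<rho>" if "y \<in> ball (snd z) (\<rho> / 2)" for y
    proof -
      have "dist z (v, y) \<le> dist (fst z) v + dist (snd z) y"
        using norm_Pair_le[of "fst z - v" "snd z - y"] by (cases z) (simp add: dist_norm)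
      with v that show ?thesis by simp
    qed
    fix y1 y2 assume "y1 \<in> ball (snd z) (\<rho> / 2)" "y2 \<in> ball (snd z) (\<rho> / 2)"
    from lipschitz_onD[OF L near[OF this(1)] near[OF this(2)]]
    show "dist (slope_field \<Psi> v y1) (slope_field \<Psi> v y2) \<le> L * dist y1 y2"
      by (simp add: slope_field_def dist_Pair_Pair)
  qed (rule lipschitz_on_nonneg[OF L])
  with \<open>0 < \<rho>\<close> show ?thesis
    unfolding local_lipschitz_at_def by (intro exI[of _ "\<rho> / 2"] conjI exI[of _ L] ballI) auto
qed

section \<open>Graphs of curves transversal to the vertical direction\<close>

lemma has_real_derivative_fst:
  "(Z has_vector_derivative Z') F \<Longrightarrow> ((\<lambda>t. fst (Z t)) has_real_derivative fst Z') F"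
  using bounded_linear.has_vector_derivative[OF bounded_linear_fst]
  by (simp add: has_real_derivative_iff_has_vector_derivative)

lemma has_real_derivative_snd:
  "(Z has_vector_derivative Z') F \<Longrightarrow> ((\<lambda>t. snd (Z t)) has_real_derivative snd Z') F"
  using bounded_linear.has_vector_derivative[OF bounded_linear_snd]
  by (simp add: has_real_derivative_iff_has_vector_derivative)

lemma strict_mono_on_if_derivative_pos:
  fixes f :: "real \<Rightarrow> real"
  assumes deriv: "\<And>x. x \<in> {a..b} \<Longrightarrow> (f has_real_derivative f' x) (at x within {a..b})"
    and pos: "\<And>x. x \<in> {a..b} \<Longrightarrow> 0 < f' x"
  shows "strict_mono_on {a..b} f"
proof (rule strict_mono_onI)
  fix x y assume xy: "x \<in> {a..b}" "y \<in> {a..b}" "x < y"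
  have "continuous_on {a..b} f"
    using deriv DERIV_continuous continuous_on_eq_continuous_within by blast
  then have "continuous_on {x..y} f" by (rule continuous_on_subset) (use xy in auto)
  moreover have "\<exists>D. (f has_real_derivative D) (at z) \<and> 0 < D" if "x < z" "z < y" for z
  proof -
    have z: "z \<in> {a<..<b}" using xy that by auto
    then have "(f has_real_derivative f' z) (at z)"
      using has_real_derivative_at_if_within_Icc[OF deriv order.refl] by auto
    with pos[of z] z show ?thesis by auto
  qed
  ultimately show "f x < f y" using DERIV_pos_imp_increasing_open[OF \<open>x < y\<close>] by blast
qed

lemma graph_fun_eq:
  assumes "inj_on (\<lambda>t. fst (Z t)) {0..T}" "t \<in> {0..T}"
  shows "graph_fun T Z (fst (Z t)) = snd (Z t)"
  using the_inv_into_f_f[OF assms] by (simp add: graph_fun_def)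

lemma is_interval_graph_dom:
  assumes "continuous_on {0..T} (\<lambda>t. fst (Z t))"
  shows "is_interval (graph_dom T Z)"
  unfolding graph_dom_def is_interval_connected_1
  using connected_continuous_image[OF assms connected_Icc] .

lemma has_real_derivative_inverse_within:
  fixes f g :: "real \<Rightarrow> real"
  assumes f: "(f has_real_derivative D) (at (g y) within A)" and "D \<noteq> 0" and "y \<in> S"
    and g: "\<And>z. z \<in> S \<Longrightarrow> g z \<in> A \<and> f (g z) = z" and cont: "continuous (at y within S) g"
  shows "(g has_real_derivative inverse D) (at y within S)"
proof -
  have quot: "((\<lambda>x. (f x - f (g y)) / (x - g y)) \<longlongrightarrow> D) (at (g y) within A)"
    using f by (simp add: has_field_derivative_iff)
  have "\<forall>\<^sub>F z in at y within S. g z \<in> A \<and> g z \<noteq> g y"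
    unfolding eventually_at_filter
  proof (rule always_eventually, intro allI impI)
    fix z assume "z \<noteq> y" "z \<in> S"
    with g[of z] g[of y] \<open>y \<in> S\<close> show "g z \<in> A \<and> g z \<noteq> g y" by metis
  qed
  with cont have "filterlim g (at (g y) within A) (at y within S)"
    by (simp add: continuous_within filterlim_at)
  from tendsto_inverse[OF filterlim_compose[OF quot this] \<open>D \<noteq> 0\<close>]
  have "((\<lambda>z. inverse ((f (g z) - f (g y)) / (g z - g y))) \<longlongrightarrow> inverse D) (at y within S)" .
  moreover have "\<forall>\<^sub>F z in at y within S. inverse ((f (g z) - f (g y)) / (g z - g y)) = (g z - g y) / (z - y)"
    unfolding eventually_at_filter
  proof (rule always_eventually, intro allI impI)
    fix z assume "z \<noteq> y" "z \<in> S"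
    with g[of z] g[of y] \<open>y \<in> S\<close>
    show "inverse ((f (g z) - f (g y)) / (g z - g y)) = (g z - g y) / (z - y)"
      by (simp add: inverse_divide)
  qed
  ultimately show ?thesis
    unfolding has_field_derivative_iff by (rule Lim_transform_eventually)
qed

lemma graph_fun_has_real_derivative:
  assumes deriv: "\<And>t. t \<in> {0..T} \<Longrightarrow> (Z has_vector_derivative Z' t) (at t within {0..T})"
    and inj: "inj_on (\<lambda>t. fst (Z t)) {0..T}" and t: "t \<in> {0..T}" and "fst (Z' t) \<noteq> 0"
  shows "(graph_fun T Z has_real_derivative snd (Z' t) / fst (Z' t)) (at (fst (Z t)) within graph_dom T Z)"
proof -
  define \<phi> where "\<phi> = the_inv_into {0..T} (\<lambda>t. fst (Z t))"
  have \<phi>: "\<phi> u \<in> {0..T} \<and> fst (Z (\<phi> u)) = u" if "u \<in> graph_dom T Z" for u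
  proof -
    from that obtain s where "s \<in> {0..T}" "u = fst (Z s)" by (auto simp: graph_dom_def)
    with the_inv_into_f_f[OF inj this(1)] show ?thesis by (simp add: \<phi>_def)
  qed
  have "\<phi> (fst (Z t)) = t" using the_inv_into_f_f[OF inj t] by (simp add: \<phi>_def)
  moreover have "continuous_on {0..T} (\<lambda>t. fst (Z t))"
    using has_real_derivative_fst[OF deriv] DERIV_continuous continuous_on_eq_continuous_within by blast
  then have "continuous_on (graph_dom T Z) \<phi>"
    unfolding \<phi>_def graph_dom_def by (rule continuous_on_inv_into[OF _ compact_Icc inj])
  ultimately have "(\<phi> has_real_derivative inverse (fst (Z' t))) (at (fst (Z t)) within graph_dom T Z)"
    using has_real_derivative_inverse_within[of "\<lambda>t. fst (Z t)" "fst (Z' t)" \<phi> "fst (Z t)" "{0..T}"]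
      has_real_derivative_fst[OF deriv[OF t]] \<open>fst (Z' t) \<noteq> 0\<close> \<phi> t
    by (auto simp: graph_dom_def continuous_on_eq_continuous_within)
  moreover have "\<phi> ` graph_dom T Z = {0..T}"
    using inj by (simp add: \<phi>_def graph_dom_def)
  ultimately have "((\<lambda>t. snd (Z t)) \<circ> \<phi> has_vector_derivative inverse (fst (Z' t)) *\<^sub>R snd (Z' t))
      (at (fst (Z t)) within graph_dom T Z)"
    using has_real_derivative_snd[OF deriv[OF t]] \<open>\<phi> (fst (Z t)) = t\<close>
    by (intro vector_diff_chain_within) (auto simp: has_real_derivative_iff_has_vector_derivative)
  then show ?thesis
    by (simp add: graph_fun_def \<phi>_def o_def has_real_derivative_iff_has_vector_derivative divide_inverse
        mult.commute)
qed

locale transversal_curve =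
  fixes T :: real and Z Z' :: "real \<Rightarrow> real \<times> real" and \<Psi> :: "real \<times> real \<Rightarrow> real \<times> real"
  assumes deriv: "\<And>t. t \<in> {0..T} \<Longrightarrow> (Z has_vector_derivative Z' t) (at t within {0..T})"
    and fst_deriv: "\<And>t. t \<in> {0..T} \<Longrightarrow> fst (Z' t) = fst (\<Psi> (Z t))"
    and transversal: "(\<forall>t\<in>{0..T}. 0 < fst (\<Psi> (Z t))) \<or> (\<forall>t\<in>{0..T}. fst (\<Psi> (Z t)) < 0)"
begin

lemma fst_strict_mono_cases:
  "strict_mono_on {0..T} (\<lambda>t. fst (Z t)) \<and> (\<forall>t\<in>{0..T}. 0 < fst (\<Psi> (Z t))) \<or>
   strict_mono_on {0..T} (\<lambda>t. - fst (Z t)) \<and> (\<forall>t\<in>{0..T}. fst (\<Psi> (Z t)) < 0)"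
proof -
  have fst_Z: "((\<lambda>t. fst (Z t)) has_real_derivative fst (\<Psi> (Z t))) (at t within {0..T})"
    if "t \<in> {0..T}" for t
    using has_real_derivative_fst[OF deriv[OF that]] fst_deriv[OF that] by simp
  from transversal show ?thesis
  proof
    assume pos: "\<forall>t\<in>{0..T}. 0 < fst (\<Psi> (Z t))"
    then have "strict_mono_on {0..T} (\<lambda>t. fst (Z t))"
      by (intro strict_mono_on_if_derivative_pos[OF fst_Z]) auto
    with pos show ?thesis by blast
  next
    assume neg: "\<forall>t\<in>{0..T}. fst (\<Psi> (Z t)) < 0"
    then have "strict_mono_on {0..T} (\<lambda>t. - fst (Z t))"
      by (intro strict_mono_on_if_derivative_pos[OF DERIV_minus[OF fst_Z]]) auto
    with neg show ?thesis by blast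
  qed
qed

lemma inj_fst: "inj_on (\<lambda>t. fst (Z t)) {0..T}"
proof -
  consider "strict_mono_on {0..T} (\<lambda>t. fst (Z t))" | "strict_mono_on {0..T} (\<lambda>t. - fst (Z t))"
    using fst_strict_mono_cases by (elim disjE conjE)
  then show ?thesis
  proof cases
    case 1
    then show ?thesis by (rule strict_mono_on_imp_inj_on)
  next
    case 2
    then have "inj_on (\<lambda>t. - fst (Z t)) {0..T}" by (rule strict_mono_on_imp_inj_on)
    then show ?thesis by (rule inj_on_imageI2[of uminus, unfolded comp_def])
  qed
qed

lemma fst_Psi_nonzero: "t \<in> {0..T} \<Longrightarrow> fst (\<Psi> (Z t)) \<noteq> 0"
  using transversal by (metis less_irrefl)

lemma displacement_sign:
  assumes "t \<in> {0..T}"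
  shows "0 \<le> (fst (Z t) - fst (Z 0)) / fst (\<Psi> (Z t))"
  using fst_strict_mono_cases
proof
  assume "strict_mono_on {0..T} (\<lambda>t. fst (Z t)) \<and> (\<forall>t\<in>{0..T}. 0 < fst (\<Psi> (Z t)))"
  then have "fst (Z 0) \<le> fst (Z t)" "0 < fst (\<Psi> (Z t))"
    using strict_mono_on_leD[of "{0..T}" "\<lambda>t. fst (Z t)" 0 t] assms by auto
  then show ?thesis by simp
next
  assume "strict_mono_on {0..T} (\<lambda>t. - fst (Z t)) \<and> (\<forall>t\<in>{0..T}. fst (\<Psi> (Z t)) < 0)"
  then have "- fst (Z 0) \<le> - fst (Z t)" "fst (\<Psi> (Z t)) < 0"
    using strict_mono_on_leD[of "{0..T}" "\<lambda>t. - fst (Z t)" 0 t] assms by auto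
  then show ?thesis by (simp add: divide_nonpos_neg)
qed

lemma is_interval_dom: "is_interval (graph_dom T Z)"
proof (rule is_interval_graph_dom)
  show "continuous_on {0..T} (\<lambda>t. fst (Z t))"
    unfolding continuous_on_eq_continuous_within
    using DERIV_continuous[OF has_real_derivative_fst[OF deriv]] by blast
qed

lemma graph_fun_derivative:
  assumes "u \<in> graph_dom T Z"
  obtains t D where "t \<in> {0..T}" "Z t = (u, graph_fun T Z u)"
    "(graph_fun T Z has_real_derivative D) (at u within graph_dom T Z)"
    "(u - fst (Z 0)) * (D - slope_field \<Psi> u (graph_fun T Z u))
      = (fst (Z t) - fst (Z 0)) / fst (\<Psi> (Z t)) * (snd (Z' t) - snd (\<Psi> (Z t)))"
proof -
  from assms obtain t where t: "t \<in> {0..T}" "fst (Z t) = u" by (auto simp: graph_dom_def)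
  then have Z_t: "Z t = (u, graph_fun T Z u)"
    using graph_fun_eq[OF inj_fst t(1)] by (simp add: prod_eq_iff)
  have "fst (Z' t) \<noteq> 0" using fst_deriv[OF t(1)] fst_Psi_nonzero[OF t(1)] by simp
  from graph_fun_has_real_derivative[OF deriv inj_fst t(1) this]
  have "(graph_fun T Z has_real_derivative snd (Z' t) / fst (\<Psi> (Z t))) (at u within graph_dom T Z)"
    unfolding t(2) fst_deriv[OF t(1)] .
  moreover have "(u - fst (Z 0)) * (snd (Z' t) / fst (\<Psi> (Z t)) - slope_field \<Psi> u (graph_fun T Z u))
      = (fst (Z t) - fst (Z 0)) / fst (\<Psi> (Z t)) * (snd (Z' t) - snd (\<Psi> (Z t)))"
    unfolding slope_field_def Z_t fst_conv t(2) diff_divide_distrib[symmetric] by simp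
  ultimately show ?thesis by (rule that[OF t(1) Z_t])
qed

lemma graph_fun_differentiable:
  assumes "u \<in> graph_dom T Z"
  shows "graph_fun T Z differentiable (at u within graph_dom T Z)"
  using graph_fun_derivative[OF assms] unfolding real_differentiable_def by blast

lemma graph_fun_subsolution:
  assumes "\<And>t. t \<in> {0..T} \<Longrightarrow> snd (Z' t) \<le> snd (\<Psi> (Z t))" and "u \<in> graph_dom T Z"
  shows "\<exists>D. (graph_fun T Z has_real_derivative D) (at u within graph_dom T Z)
    \<and> (u - fst (Z 0)) * (D - slope_field \<Psi> u (graph_fun T Z u)) \<le> 0"
proof -
  obtain t D where t: "t \<in> {0..T}" and "(graph_fun T Z has_real_derivative D) (at u within graph_dom T Z)"
    "(u - fst (Z 0)) * (D - slope_field \<Psi> u (graph_fun T Z u))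
      = (fst (Z t) - fst (Z 0)) / fst (\<Psi> (Z t)) * (snd (Z' t) - snd (\<Psi> (Z t)))"
    by (rule graph_fun_derivative[OF assms(2)])
  moreover have "(fst (Z t) - fst (Z 0)) / fst (\<Psi> (Z t)) * (snd (Z' t) - snd (\<Psi> (Z t))) \<le> 0"
    using assms(1)[OF t] by (intro mult_nonneg_nonpos displacement_sign[OF t]) simp
  ultimately show ?thesis by auto
qed

lemma graph_fun_supersolution:
  assumes "\<And>t. t \<in> {0..T} \<Longrightarrow> snd (\<Psi> (Z t)) \<le> snd (Z' t)" and "u \<in> graph_dom T Z"
  shows "\<exists>D. (graph_fun T Z has_real_derivative D) (at u within graph_dom T Z)
    \<and> 0 \<le> (u - fst (Z 0)) * (D - slope_field \<Psi> u (graph_fun T Z u))"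
proof -
  obtain t D where t: "t \<in> {0..T}" and "(graph_fun T Z has_real_derivative D) (at u within graph_dom T Z)"
    "(u - fst (Z 0)) * (D - slope_field \<Psi> u (graph_fun T Z u))
      = (fst (Z t) - fst (Z 0)) / fst (\<Psi> (Z t)) * (snd (Z' t) - snd (\<Psi> (Z t)))"
    by (rule graph_fun_derivative[OF assms(2)])
  moreover have "0 \<le> (fst (Z t) - fst (Z 0)) / fst (\<Psi> (Z t)) * (snd (Z' t) - snd (\<Psi> (Z t)))"
    using assms(1)[OF t] by (intro mult_nonneg_nonneg displacement_sign[OF t]) simp
  ultimately show ?thesis by auto
qed

lemma graph_fun_local_lipschitz:
  assumes "\<And>z. fst (\<Psi> z) \<noteq> 0 \<Longrightarrow> local_lipschitz_at (slope_field \<Psi>) (fst z) (snd z)"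
    and "u \<in> graph_dom T Z"
  shows "local_lipschitz_at (slope_field \<Psi>) u (graph_fun T Z u)"
proof -
  obtain t where t: "t \<in> {0..T}" "Z t = (u, graph_fun T Z u)"
    using graph_fun_derivative[OF assms(2)] by blast
  with assms(1)[OF fst_Psi_nonzero[OF t(1)]] show ?thesis by simp
qed

end

lemma graph_fun_comparison:
  assumes "transversal_curve T Z Z' \<Psi>" "transversal_curve T W W' \<Psi>" and "Z 0 = W 0" "0 \<le> T"
    and below: "\<And>t. t \<in> {0..T} \<Longrightarrow> snd (Z' t) \<le> snd (\<Psi> (Z t))"
    and above: "\<And>t. t \<in> {0..T} \<Longrightarrow> snd (\<Psi> (W t)) \<le> snd (W' t)"
    and lip: "\<And>z. fst (\<Psi> z) \<noteq> 0 \<Longrightarrow> local_lipschitz_at (slope_field \<Psi>) (fst z) (snd z)"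
    and u: "u \<in> graph_dom T Z \<inter> graph_dom T W"
  shows "graph_fun T Z u \<le> graph_fun T W u"
proof -
  interpret Z: transversal_curve T Z Z' \<Psi> by fact
  interpret W: transversal_curve T W W' \<Psi> by fact
  have "0 \<in> {0..T}" using \<open>0 \<le> T\<close> by simp
  then have start: "fst (Z 0) \<in> graph_dom T Z" "fst (Z 0) \<in> graph_dom T W"
    "graph_fun T Z (fst (Z 0)) = graph_fun T W (fst (Z 0))"
    using graph_fun_eq[OF Z.inj_fst] graph_fun_eq[OF W.inj_fst] \<open>Z 0 = W 0\<close>
    unfolding graph_dom_def by (metis imageI)+
  show ?thesis
  proof (rule ode_comparison[OF Z.is_interval_dom W.is_interval_dom start(1,2), where G = "slope_field \<Psi>"
        and p = "graph_fun T Z" and q = "graph_fun T W" and u = u])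
    show "x \<in> graph_dom T W \<Longrightarrow> \<exists>D. (graph_fun T W has_real_derivative D) (at x within graph_dom T W)
      \<and> 0 \<le> (x - fst (Z 0)) * (D - slope_field \<Psi> x (graph_fun T W x))" for x
      using W.graph_fun_supersolution[OF above] \<open>Z 0 = W 0\<close> by simp
  qed (use u start(3) Z.graph_fun_subsolution[OF below] W.graph_fun_local_lipschitz[OF lip] in auto)
qed

theorem mainTheorem16:
  fixes T :: real
    and X Y X' Y' :: "real \<Rightarrow> real \<times> real"
    and \<Psi> :: "real \<times> real \<Rightarrow> real \<times> real"
  assumes X_deriv: "\<forall>t\<in>{0..T}. (X has_vector_derivative X' t) (at t within {0..T})"
    and X'_cont: "continuous_on {0..T} X'"
    and Y_deriv: "\<forall>t\<in>{0..T}. (Y has_vector_derivative Y' t) (at t within {0..T})"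
    and Y'_cont: "continuous_on {0..T} Y'"
    and Psi_C1: "\<exists>D :: real \<times> real \<Rightarrow> ((real \<times> real) \<Rightarrow>\<^sub>L (real \<times> real)).
                   (\<forall>x. (\<Psi> has_derivative blinfun_apply (D x)) (at x)) \<and> continuous_on UNIV D"
    and Y_ode: "\<forall>t\<in>{0..T}. Y' t = \<Psi> (Y t)"
    and init_eq: "X 0 = Y 0"
    and init_E: "fst (\<Psi> (X 0)) > 0 \<or> fst (\<Psi> (X 0)) < 0"
    and sign_pos: "fst (\<Psi> (X 0)) > 0 \<Longrightarrow>
                     \<forall>t\<in>{0<..T}. fst (\<Psi> (X t)) > 0 \<and> fst (\<Psi> (Y t)) > 0"
    and sign_neg: "fst (\<Psi> (X 0)) < 0 \<Longrightarrow>
                     \<forall>t\<in>{0<..T}. fst (\<Psi> (X t)) < 0 \<and> fst (\<Psi> (Y t)) < 0"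
    and cmp: "(\<forall>t\<in>{0..T}. le2 (X' t) (\<Psi> (X t))) \<or> (\<forall>t\<in>{0..T}. ge2 (X' t) (\<Psi> (X t)))"
  shows "inj_on (\<lambda>t. fst (X t)) {0..T} \<and> inj_on (\<lambda>t. fst (Y t)) {0..T}
    \<and> (\<forall>u\<in>graph_dom T X - {fst (X 0)}. graph_fun T X differentiable (at u within graph_dom T X))
    \<and> (\<forall>u\<in>graph_dom T Y - {fst (X 0)}. graph_fun T Y differentiable (at u within graph_dom T Y))
    \<and> ((\<forall>t\<in>{0..T}. le2 (X' t) (\<Psi> (X t))) \<longrightarrow>
          (\<forall>u\<in>graph_dom T X \<inter> graph_dom T Y. graph_fun T X u \<le> graph_fun T Y u))
    \<and> ((\<forall>t\<in>{0..T}. ge2 (X' t) (\<Psi> (X t))) \<longrightarrow>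
          (\<forall>u\<in>graph_dom T X \<inter> graph_dom T Y. graph_fun T X u \<ge> graph_fun T Y u))"
proof (cases "0 \<le> T")
  case False
  then show ?thesis by (simp add: graph_dom_def)
next
  case True
  have "t = 0 \<or> t \<in> {0<..T}" if "t \<in> {0..T}" for t using that by auto
  then have sign: "(\<forall>t\<in>{0..T}. 0 < fst (\<Psi> (X t)) \<and> 0 < fst (\<Psi> (Y t)))
      \<or> (\<forall>t\<in>{0..T}. fst (\<Psi> (X t)) < 0 \<and> fst (\<Psi> (Y t)) < 0)"
    using init_E sign_pos sign_neg init_eq by metis
  have X: "transversal_curve T X X' \<Psi>"
    using X_deriv cmp sign by unfold_locales (auto simp: le2_def ge2_def)
  have Y: "transversal_curve T Y Y' \<Psi>"
    using Y_deriv Y_ode sign by unfold_locales auto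
  note lip = slope_field_local_lipschitz[OF Psi_C1]
  have "(\<forall>t\<in>{0..T}. le2 (X' t) (\<Psi> (X t))) \<Longrightarrow> u \<in> graph_dom T X \<inter> graph_dom T Y
      \<Longrightarrow> graph_fun T X u \<le> graph_fun T Y u"
    "(\<forall>t\<in>{0..T}. ge2 (X' t) (\<Psi> (X t))) \<Longrightarrow> u \<in> graph_dom T X \<inter> graph_dom T Y
      \<Longrightarrow> graph_fun T Y u \<le> graph_fun T X u" for u
    using graph_fun_comparison[OF X Y init_eq True _ _ lip, of u]
      graph_fun_comparison[OF Y X init_eq[symmetric] True _ _ lip, of u] Y_ode
    by (auto simp: le2_def ge2_def Int_commute)
  then show ?thesis
    using transversal_curve.inj_fst[OF X] transversal_curve.inj_fst[OF Y]
      transversal_curve.graph_fun_differentiable[OF X] transversal_curve.graph_fun_differentiable[OF Y]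
    by auto
qed

end
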